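(* Let $a\in\overline{\mathbb{F}}_2^*$ and let $n>1$ be an odd integer. Then: (i) $0$ is the unique critical value of $X^n$, and $\mathcal{R}_{X^n}(0)=[n]$, where $0$ is the unique root of $X^n$; (ii) $0$ is the unique critical value of $f(X):=D_n(X,a)$, and $\mathcal{R}_f(0)$ consists of one $1$ and $(n-1)/2$ copies of $2$, where $0$ is the unique root of $f(X)$ with ramification index $1$.
   Context: For a field $K$, $a\in K$ and positive integer $n$, the Dickson polynomial $D_n(X,a)\in K[X]$ is the unique polynomial with $D_n(X+a/X,a)=X^n+a^n/X^n$; explicitly $D_n(X,a)=\sum_{i=0}^{\lfloor n/2\rfloor}\frac{n}{n-i}\binom{n-i}{i}(-a)^iX^{n-2i}$. For nonconstant $f(X)\in K[X]$, a critical point is $c\in\overline{K}$ with $f'(c)=0$, and a critical value is $f(c)$ for a critical point $c$. The ramification index $e_f(c)$ is the multiplicity of $c$ as a root of $f(X)-f(c)$, and the ramification multiset $\mathcal{R}_f(d)$ for $d\in\overline{K}$ is the multiset of multiplicities of the roots of $f(X)-d$ in $\overline{K}$. *)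

theory Defs
  imports "HOL-Algebra.Algebraic_Closure_Type" "HOL-Library.Z2" "HOL-Library.Multiset"
begin

text \<open>The rational coefficient n/(n-i) * binom(n-i,i) is a nonnegative integer
  (for n \<ge> 1), computed here by exact natural-number division.\<close>
definition dickson :: "nat \<Rightarrow> 'a::comm_ring_1 \<Rightarrow> 'a poly" where
  "dickson n a = (\<Sum>i\<in>{0..n div 2}.
      monom (of_nat ((n * ((n - i) choose i)) div (n - i)) * (- a) ^ i) (n - 2 * i))"

definition critical_points :: "'a::idom poly \<Rightarrow> 'a set" where
  "critical_points f = {c. poly (pderiv f) c = 0}"

definition critical_values :: "'a::idom poly \<Rightarrow> 'a set" where
  "critical_values f = poly f ` critical_points f"

definition ram_index :: "'a::idom poly \<Rightarrow> 'a \<Rightarrow> nat" where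
  "ram_index f c = order c (f - [:poly f c:])"

definition ram_mset :: "'a::idom poly \<Rightarrow> 'a \<Rightarrow> nat multiset" where
  "ram_mset f d = image_mset (\<lambda>r. order r (f - [:d:])) (mset_set {r. poly (f - [:d:]) r = 0})"

end

theory Submission
  imports Defs
begin

text \<open>Write n = 2m + 1 and a = b^2. In characteristic 2 the Dickson polynomial D_n(X, a)
  has only odd-degree terms, with coefficients 0 or 1 times (-a)^i = (b^i)^2, so
  D_n(X, a) = X g(X)^2 with deg g \<le> m and g(0) = b^m \<noteq> 0. Its derivative is g^2, so the
  critical points are the roots of g, and all of them are mapped to 0.
  By the functional equation D_n(x + a/x, a) = x^n + (a/x)^n, each of the 2m nontrivial
  n-th roots of unity z (distinct because n is odd) yields the nonzero root b(z + 1/z) of g,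
  and only z and 1/z yield the same one. So g has at least, hence exactly, m roots, all
  simple: 0 has ramification index 1 and the other m roots of D_n have index 2.
  For X^n the derivative n X^(n-1) = X^(n-1) vanishes only at 0.\<close>

section \<open>Dickson polynomials\<close>

definition dickson_coeff :: "nat \<Rightarrow> nat \<Rightarrow> nat" where
  "dickson_coeff n i = n * ((n - i) choose i) div (n - i)"

lemma dickson_coeff_0: "n \<ge> 1 \<Longrightarrow> dickson_coeff n 0 = 1"
  by (simp add: dickson_coeff_def)

lemma dickson_coeff_binomial:
  assumes "1 \<le> i" "2 * i \<le> n"
  shows "dickson_coeff n i = ((n - i) choose i) + ((n - i - 1) choose (i - 1))"
proof -
  obtain t where t: "i = Suc t" using assms by (cases i) auto
  obtain p where p: "n - i = Suc p" using assms by (cases "n - i") auto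
  have n: "n = Suc p + Suc t" using p t assms by simp
  have "Suc t * (Suc p choose Suc t) = Suc p * (p choose t)"
    by (rule Suc_times_binomial)
  then have "n * (Suc p choose Suc t) = Suc p * ((Suc p choose Suc t) + (p choose t))"
    unfolding n by (simp add: algebra_simps del: binomial_Suc_Suc)
  then have "dickson_coeff n i = Suc p * ((Suc p choose Suc t) + (p choose t)) div Suc p"
    unfolding dickson_coeff_def using p t by (simp del: binomial_Suc_Suc)
  also have "\<dots> = (Suc p choose Suc t) + (p choose t)"
    by (rule nonzero_mult_div_cancel_left) simp
  finally show ?thesis using p t by simp
qed

lemma dickson_coeff_rec:
  assumes "n \<ge> 1" "1 \<le> j" "2 * j \<le> n + 1"
  shows "dickson_coeff (n + 2) j = dickson_coeff (n + 1) j + dickson_coeff n (j - 1)"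
proof (cases "j = 1")
  case True
  then show ?thesis using assms by (simp add: dickson_coeff_binomial dickson_coeff_0)
next
  case False
  then obtain t where t: "j = Suc (Suc t)" using assms by (cases j; cases "j - 1") auto
  define p where "p = n - j"
  have p: "n = j + p" using assms unfolding p_def by simp
  have "dickson_coeff (n + 2) j = ((p + 2) choose j) + ((p + 1) choose (j - 1))"
    using assms p by (subst dickson_coeff_binomial) (auto simp: numeral_eq_Suc)
  moreover have "dickson_coeff (n + 1) j = ((p + 1) choose j) + (p choose (j - 1))"
    using assms p by (subst dickson_coeff_binomial) auto
  moreover have "dickson_coeff n (j - 1) = ((p + 1) choose (j - 1)) + (p choose (j - 2))"
    using assms p t by (subst dickson_coeff_binomial) auto
  ultimately show ?thesis using t by (simp add: numeral_eq_Suc)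
qed

lemma dickson_coeff_middle: "dickson_coeff (2 * m + 1) m = 2 * m + 1"
proof -
  have "2 * m + 1 - m = Suc m" by simp
  then have "dickson_coeff (2 * m + 1) m = (2 * m + 1) * Suc m div Suc m"
    unfolding dickson_coeff_def by simp
  also have "\<dots> = 2 * m + 1"
    by (rule nonzero_mult_div_cancel_right) simp
  finally show ?thesis .
qed

lemma coeff_dickson:
  "coeff (dickson n a) k =
     (if k \<le> n \<and> even (n - k)
      then of_nat (dickson_coeff n ((n - k) div 2)) * (- a) ^ ((n - k) div 2) else 0)"
proof -
  have "coeff (dickson n a) k =
      (\<Sum>i\<in>{0..n div 2}. if n - 2 * i = k then of_nat (dickson_coeff n i) * (- a) ^ i else 0)"
    unfolding dickson_def coeff_sum coeff_monom dickson_coeff_def by simp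
  also have "\<dots> = (if k \<le> n \<and> even (n - k)
      then of_nat (dickson_coeff n ((n - k) div 2)) * (- a) ^ ((n - k) div 2) else 0)"
  proof (cases "k \<le> n \<and> even (n - k)")
    case True
    then have "(\<Sum>i\<in>{0..n div 2}. if n - 2 * i = k then of_nat (dickson_coeff n i) * (- a) ^ i else 0)
        = (\<Sum>i\<in>{0..n div 2}. if i = (n - k) div 2 then of_nat (dickson_coeff n i) * (- a) ^ i else 0)"
      by (intro sum.cong) (auto elim!: evenE)
    also have "\<dots> = of_nat (dickson_coeff n ((n - k) div 2)) * (- a) ^ ((n - k) div 2)"
      using True by (subst sum.delta) auto
    finally show ?thesis unfolding if_P[OF True] .
  next
    case False
    then have "(\<Sum>i\<in>{0..n div 2}. if n - 2 * i = k then of_nat (dickson_coeff n i) * (- a) ^ i else 0)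
        = (\<Sum>i\<in>{0..n div 2}. 0)"
      by (intro sum.cong) auto
    then show ?thesis unfolding if_not_P[OF False] by simp
  qed
  finally show ?thesis .
qed

lemma coeff_0_dickson:
  assumes "n \<ge> 1"
  shows "coeff (dickson n a) 0 = (if even n then 2 * (- a) ^ (n div 2) else 0)"
proof (cases "even n")
  case True
  then obtain t where "n = 2 * t" by (rule evenE)
  moreover have "dickson_coeff (2 * t) t = 2" if "t \<ge> 1"
    using that by (subst dickson_coeff_binomial) auto
  ultimately show ?thesis using assms by (simp add: coeff_dickson)
qed (simp add: coeff_dickson)

lemma coeff_Suc_dickson_rec:
  assumes "n \<ge> 1"
  shows "coeff (dickson (n + 2) a) (Suc k) =
           coeff (dickson (n + 1) a) k - a * coeff (dickson n a) (Suc k)"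
proof -
  consider "k > n + 1" | "k \<le> n + 1" "odd (n + 1 - k)" | "k = n + 1"
    | "k \<le> n" "even (n + 1 - k)" by linarith
  then show ?thesis
  proof cases
    case 2
    then have "odd (n - Suc k)" if "Suc k \<le> n" using that by presburger
    then show ?thesis using 2 by (auto simp: coeff_dickson)
  next
    case 3
    then show ?thesis using assms by (simp add: coeff_dickson dickson_coeff_0)
  next
    case 4
    from 4(2) obtain j where j: "n + 1 - k = 2 * j" by (rule evenE)
    have kn: "k < n" using 4 j by (cases "k = n") auto
    then have j1: "j \<ge> 1" using j by simp
    have rec: "dickson_coeff (n + 2) j = dickson_coeff (n + 1) j + dickson_coeff n (j - 1)"
      by (rule dickson_coeff_rec) (use assms j1 j in auto)
    have "n - Suc k = 2 * (j - 1)"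
      using j kn j1 by simp
    then have "coeff (dickson n a) (Suc k) = of_nat (dickson_coeff n (j - 1)) * (- a) ^ (j - 1)"
      using kn by (simp add: coeff_dickson)
    moreover have "coeff (dickson (n + 2) a) (Suc k) = of_nat (dickson_coeff (n + 2) j) * (- a) ^ j"
      using j kn by (simp add: coeff_dickson)
    moreover have "coeff (dickson (n + 1) a) k = of_nat (dickson_coeff (n + 1) j) * (- a) ^ j"
      using j kn by (simp add: coeff_dickson)
    moreover have "(- a) ^ j = (- a) * (- a) ^ (j - 1)"
      using j1 by (simp add: power_eq_if)
    ultimately show ?thesis unfolding rec of_nat_add by (simp add: algebra_simps)
  qed (simp add: coeff_dickson)
qed

lemma dickson_rec:
  fixes a :: "'a::comm_ring_1"
  assumes "n \<ge> 1"
  shows "dickson (n + 2) a = pCons 0 (dickson (n + 1) a) - smult a (dickson n a)"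
proof (rule poly_eqI)
  fix k
  show "coeff (dickson (n + 2) a) k = coeff (pCons 0 (dickson (n + 1) a) - smult a (dickson n a)) k"
  proof (cases k)
    case 0
    then show ?thesis using assms by (simp add: coeff_0_dickson)
  next
    case (Suc k')
    then show ?thesis using coeff_Suc_dickson_rec[OF assms, of a k'] by simp
  qed
qed

lemma dickson_1: "dickson 1 a = [:0, 1:]"
  by (simp add: dickson_def monom_altdef)

lemma dickson_2: "dickson 2 a = [:- 2 * a, 0, 1:]"
  by (rule poly_eqI) (auto simp: coeff_dickson dickson_coeff_def coeff_pCons split: nat.splits)

lemma poly_dickson_plus_div:
  fixes a x :: "'a::field"
  assumes "x \<noteq> 0" "n \<ge> 1"
  shows "poly (dickson n a) (x + a / x) = x ^ n + (a / x) ^ n"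
  using assms(2)
proof (induction n rule: less_induct)
  case (less n)
  define w where "w = a / x"
  have a: "a = x * w" using assms(1) by (simp add: w_def)
  consider "n = 1" | "n = 2" | "n \<ge> 3" using less.prems by linarith
  then show ?case
  proof cases
    case 1 then show ?thesis unfolding 1 dickson_1 by simp
  next
    case 2
    show ?thesis unfolding 2 dickson_2
      by (simp add: a w_def[symmetric] algebra_simps power2_eq_square)
  next
    case 3
    define m where "m = n - 2"
    have m: "n = m + 2" "m \<ge> 1" using 3 by (auto simp: m_def)
    have "poly (dickson (m + 1) a) (x + a / x) = x ^ (m + 1) + (a / x) ^ (m + 1)"
      and "poly (dickson m a) (x + a / x) = x ^ m + (a / x) ^ m"
      using less.IH m by auto
    then show ?thesis unfolding m(1) dickson_rec[OF m(2)]
      by (simp add: w_def[symmetric] a algebra_simps)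
  qed
qed

section \<open>Characteristic two\<close>

lemma char2_add_self:
  fixes x :: "'a::ring_1"
  assumes "(2::'a) = 0"
  shows "x + x = 0"
  by (metis assms mult_2 mult_zero_left)

lemma char2_minus:
  fixes x :: "'a::ring_1"
  assumes "(2::'a) = 0"
  shows "- x = x"
  using char2_add_self[OF assms, of x] by (simp add: add_eq_0_iff)

lemma char2_of_nat:
  assumes "(2::'a::ring_1) = 0"
  shows "(of_nat k :: 'a) = (if even k then 0 else 1)"
  by (induction k) (auto simp: char2_add_self[OF assms])

lemma char2_power2_add:
  fixes x y :: "'a::comm_ring_1"
  assumes "(2::'a) = 0"
  shows "(x + y) ^ 2 = x ^ 2 + y ^ 2"
  by (simp add: power2_sum assms)

lemma char2_power2_sum:
  fixes f :: "'b \<Rightarrow> 'a::comm_ring_1"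
  assumes "(2::'a) = 0"
  shows "(\<Sum>i\<in>A. f i) ^ 2 = (\<Sum>i\<in>A. f i ^ 2)"
  by (induction A rule: infinite_finite_induct) (simp_all add: char2_power2_add[OF assms])

lemma two_eq_zero_alg_closure_bit: "(2 :: bit alg_closure) = 0"
proof -
  have "(2 :: bit alg_closure) = to_ac (2 :: bit)" by (simp only: to_ac_numeral)
  also have "\<dots> = 0" by simp
  finally show ?thesis .
qed

definition dickson_sqrt_factor :: "nat \<Rightarrow> 'a::comm_ring_1 \<Rightarrow> 'a poly" where
  "dickson_sqrt_factor m b =
     (\<Sum>i\<in>{0..m}. monom (of_nat (dickson_coeff (2 * m + 1) i) * b ^ i) (m - i))"

lemma dickson_odd_char2:
  fixes b :: "'a::comm_ring_1"
  assumes char2: "(2::'a) = 0"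
  shows "dickson (2 * m + 1) (b ^ 2) = [:0, 1:] * dickson_sqrt_factor m b ^ 2"
proof -
  have char2_poly: "(2::'a poly) = 0" using char2 by (simp add: numeral_poly)
  have "[:0, 1:] * monom (of_nat (dickson_coeff (2 * m + 1) i) * b ^ i) (m - i) ^ 2
      = monom (of_nat (dickson_coeff (2 * m + 1) i) * (- (b ^ 2)) ^ i) (2 * m + 1 - 2 * i)"
    if "i \<le> m" for i
    using that
    by (simp add: monom_power power_mult_distrib char2_of_nat[OF char2] char2_minus[OF char2]
        monom_Suc smult_1_left power_mult[symmetric] mult.commute[of 2] Suc_diff_le diff_mult_distrib)
  then show ?thesis
    unfolding dickson_sqrt_factor_def char2_power2_sum[OF char2_poly] sum_distrib_left dickson_def
    by (intro sum.cong) (simp_all add: dickson_coeff_def)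
qed

lemma poly_dickson_sqrt_factor_0:
  fixes b :: "'a::comm_ring_1"
  assumes char2: "(2::'a) = 0"
  shows "poly (dickson_sqrt_factor m b) 0 = b ^ m"
proof -
  have "poly (dickson_sqrt_factor m b) 0 =
      (\<Sum>i\<in>{0..m}. if i = m then of_nat (dickson_coeff (2 * m + 1) i) * b ^ i else 0)"
    unfolding poly_0_coeff_0 dickson_sqrt_factor_def coeff_sum coeff_monom
    by (intro sum.cong) auto
  then show ?thesis using dickson_coeff_middle[of m] by (simp add: char2_of_nat[OF char2])
qed

lemma degree_dickson_sqrt_factor_le: "degree (dickson_sqrt_factor m b) \<le> m"
  unfolding dickson_sqrt_factor_def
  by (rule degree_sum_le) (auto intro: order.trans[OF degree_monom_le])

section \<open>Counting roots\<close>

lemma card_le_mult_card_image: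
  assumes "finite A" and "\<And>y. card {x\<in>A. f x = y} \<le> k"
  shows "card A \<le> k * card (f ` A)"
proof -
  have "card A = card (\<Union>y\<in>f ` A. {x\<in>A. f x = y})"
    by (rule arg_cong[where f = card]) blast
  also have "\<dots> \<le> (\<Sum>y\<in>f ` A. card {x\<in>A. f x = y})"
    by (rule card_UN_le) (use assms(1) in simp)
  also have "\<dots> \<le> (\<Sum>y\<in>f ` A. k)"
    by (rule sum_mono) (rule assms(2))
  finally show ?thesis by (simp add: mult.commute)
qed

lemma size_proots_eq_sum_order:
  "p \<noteq> 0 \<Longrightarrow> size (proots p) = (\<Sum>x\<in>{x. poly p x = 0}. order x p)"
  using size_multiset_overloaded_eq[of "proots p"] by simp

lemma size_proots_alg_closed:
  fixes p :: "'a::alg_closed_field poly"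
  assumes "p \<noteq> 0"
  shows "size (proots p) = degree p"
proof -
  obtain A where A: "size A = degree p" "p = smult (lead_coeff p) (\<Prod>x\<in>#A. [:-x, 1:])"
    using alg_closed_imp_factorization[OF assms] by blast
  have "proots p = proots (\<Prod>x\<in>#A. [:-x, 1:])"
    using A(2) assms by (metis proots_smult smult_0_left)
  also have "\<dots> = A"
  proof (induction A)
    case (add x A)
    have "(\<Prod>y\<in>#A. [:-y, 1:]) \<noteq> 0" by (auto simp: prod_mset_zero_iff)
    then show ?case using add.IH by (simp add: proots_mult del: mult_pCons_left)
  qed simp
  finally show ?thesis using A(1) by simp
qed

lemma order_le_1_if_poly_pderiv_nonzero:
  fixes p :: "'a::idom poly"
  assumes "poly (pderiv p) x \<noteq> 0"
  shows "order x p \<le> 1"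
proof (rule ccontr)
  assume "\<not> order x p \<le> 1"
  then have "[:-x, 1:] ^ 2 dvd p"
    by (intro power_le_dvd[OF order_1]) simp
  then obtain q where "p = [:-x, 1:] ^ 2 * q" ..
  then have "poly (pderiv p) x = 0"
    by (simp add: pderiv_mult pderiv_power pderiv_pCons)
  with assms show False ..
qed

lemma card_roots_eq_degree_if_separable:
  fixes p :: "'a::alg_closed_field poly"
  assumes "p \<noteq> 0" and "\<And>x. poly p x = 0 \<Longrightarrow> poly (pderiv p) x \<noteq> 0"
  shows "card {x. poly p x = 0} = degree p"
proof -
  have "order x p = 1" if "poly p x = 0" for x
    using order_le_1_if_poly_pderiv_nonzero[OF assms(2)[OF that]] order_gt_0_iff[OF assms(1), of x] that
    by simp
  then have "(\<Sum>x\<in>{x. poly p x = 0}. order x p) = card {x. poly p x = 0}"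
    by simp
  then show ?thesis
    using size_proots_eq_sum_order[OF assms(1)] size_proots_alg_closed[OF assms(1)] by simp
qed

lemma card_roots_of_unity:
  assumes "(of_nat n :: 'a::alg_closed_field) \<noteq> 0"
  shows "card {z::'a. z ^ n = 1} = n"
proof -
  have "n \<ge> 1" using assms by (cases n) auto
  define p :: "'a poly" where "p = monom 1 n - 1"
  have poly_p: "poly p z = z ^ n - 1" for z
    by (simp add: p_def poly_monom)
  have "p = monom 1 n + [:-1:]"
    by (simp add: p_def one_pCons)
  then have "degree p = n"
    using \<open>n \<ge> 1\<close> by (simp add: degree_add_eq_left degree_monom_eq)
  then have "p \<noteq> 0" using \<open>n \<ge> 1\<close> by auto
  moreover have "poly (pderiv p) z \<noteq> 0" if "poly p z = 0" for z
  proof -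
    have "z \<noteq> 0" using that \<open>n \<ge> 1\<close> by (auto simp: poly_p power_0_left)
    then show ?thesis using assms by (simp add: p_def pderiv_diff pderiv_monom poly_monom)
  qed
  ultimately have "card {z. poly p z = 0} = n"
    using card_roots_eq_degree_if_separable \<open>degree p = n\<close> by metis
  then show ?thesis by (simp add: poly_p)
qed

lemma order_eq_1_if_degree_le_card_roots:
  fixes p :: "'a::idom poly"
  assumes "p \<noteq> 0" and "degree p \<le> card {x. poly p x = 0}" and "poly p x = 0"
  shows "order x p = 1"
proof (rule ccontr)
  define R where "R = {x. poly p x = 0}"
  have "finite R" unfolding R_def using assms(1) by (rule poly_roots_finite)
  assume "order x p \<noteq> 1"
  then have "order x p > 1" using order_gt_0_iff[OF assms(1), of x] assms(3) by simp
  then have "(\<Sum>y\<in>R. 1) < (\<Sum>y\<in>R. order y p)"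
    using \<open>finite R\<close> assms(1,3)
    by (intro sum_strict_mono_ex1) (auto simp: R_def order_gt_0_iff Suc_le_eq)
  also have "\<dots> = size (proots p)"
    unfolding R_def by (rule size_proots_eq_sum_order[OF assms(1), symmetric])
  also have "\<dots> \<le> card R"
    using size_proots_le[of p] assms(2) unfolding R_def by linarith
  finally show False by simp
qed

section \<open>The roots of the square-root factor\<close>

lemma plus_inverse_eq_plus_inverseD:
  fixes z w :: "'a::field"
  assumes "z \<noteq> 0" "w \<noteq> 0" "z + inverse z = w + inverse w"
  shows "w = z \<or> w = inverse z"
proof -
  have "(w - z) * (w * z - 1) = (w + inverse w - (z + inverse z)) * (w * z)"
    using assms(1,2) by (simp add: field_simps)
  then have "w = z \<or> w * z = 1" using assms(3) by simp
  then show ?thesis by (metis inverse_unique mult.commute)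
qed

lemma char2_plus_inverse_eq_0_iff:
  fixes z :: "'a::field"
  assumes char2: "(2::'a) = 0" and "z \<noteq> 0"
  shows "z + inverse z = 0 \<longleftrightarrow> z = 1"
proof -
  have square: "z * (z + inverse z) = (z + 1) ^ 2"
    using assms by (simp add: char2_power2_add[OF char2] field_simps power2_eq_square)
  have "z + inverse z = 0 \<longleftrightarrow> z * (z + inverse z) = 0"
    using assms(2) by simp
  also have "\<dots> \<longleftrightarrow> z = - 1"
    unfolding square by (simp add: eq_neg_iff_add_eq_0)
  finally show ?thesis by (simp only: char2_minus[OF char2])
qed

lemma poly_dickson_char2_root_of_unity:
  fixes b z :: "'a::field"
  assumes char2: "(2::'a) = 0" and "b \<noteq> 0" "z ^ n = 1" "n \<ge> 1"
  shows "poly (dickson n (b ^ 2)) (b * (z + inverse z)) = 0"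
proof -
  have "z \<noteq> 0" using assms(3,4) by (auto simp: power_0_left)
  then have "b * (z + inverse z) = b * z + b ^ 2 / (b * z)"
    using assms(2) by (simp add: field_simps power2_eq_square)
  then have "poly (dickson n (b ^ 2)) (b * (z + inverse z)) = (b * z) ^ n + (b * inverse z) ^ n"
    using poly_dickson_plus_div[of "b * z" n "b ^ 2"] assms(2,4) \<open>z \<noteq> 0\<close>
    by (simp add: power2_eq_square field_simps)
  also have "\<dots> = b ^ n + b ^ n"
    using assms(3) by (simp add: power_mult_distrib power_inverse)
  finally show ?thesis by (simp add: char2_add_self[OF char2])
qed

lemma poly_dickson_sqrt_factor_root_of_unity:
  fixes b z :: "'a::field"
  assumes char2: "(2::'a) = 0" and "b \<noteq> 0" "z ^ (2 * m + 1) = 1" "z \<noteq> 1"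
  shows "poly (dickson_sqrt_factor m b) (b * (z + inverse z)) = 0"
proof -
  have "z \<noteq> 0" using assms(3) by (auto simp: power_0_left)
  then have "b * (z + inverse z) \<noteq> 0"
    using assms(2,4) char2_plus_inverse_eq_0_iff[OF char2] by simp
  moreover have "poly ([:0, 1:] * dickson_sqrt_factor m b ^ 2) (b * (z + inverse z)) = 0"
    unfolding dickson_odd_char2[OF char2, symmetric]
    by (rule poly_dickson_char2_root_of_unity[OF char2 assms(2,3)]) simp
  ultimately show ?thesis by simp
qed

lemma card_fibre_scaled_plus_inverse_le_2:
  fixes b :: "'a::field"
  assumes "b \<noteq> 0" "0 \<notin> A"
  shows "card {z\<in>A. b * (z + inverse z) = y} \<le> 2"
proof (cases "\<exists>z\<in>A. b * (z + inverse z) = y")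
  case True
  then obtain z where z: "z \<in> A" "b * (z + inverse z) = y" by blast
  have "{w\<in>A. b * (w + inverse w) = y} \<subseteq> {z, inverse z}"
  proof
    fix w assume w: "w \<in> {w\<in>A. b * (w + inverse w) = y}"
    then have "w \<in> A" "z + inverse z = w + inverse w"
      using z assms(1) by auto
    moreover have "z \<noteq> 0" "w \<noteq> 0" using assms(2) z(1) \<open>w \<in> A\<close> by auto
    ultimately show "w \<in> {z, inverse z}"
      using plus_inverse_eq_plus_inverseD by blast
  qed
  then have "card {w\<in>A. b * (w + inverse w) = y} \<le> card {z, inverse z}"
    by (intro card_mono) auto
  also have "\<dots> \<le> 2" by (simp add: card_insert_if)
  finally show ?thesis .
next
  case False
  then have "{z\<in>A. b * (z + inverse z) = y} = {}" by blast
  then show ?thesis by (simp only: card.empty zero_le)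
qed

lemma card_roots_dickson_sqrt_factor_ge:
  fixes b :: "'a::alg_closed_field"
  assumes char2: "(2::'a) = 0" and "b \<noteq> 0"
  shows "m \<le> card {y. poly (dickson_sqrt_factor m b) y = 0}"
proof -
  define R where "R = {y. poly (dickson_sqrt_factor m b) y = 0}"
  define U where "U = {z::'a. z ^ (2 * m + 1) = 1} - {1}"
  have card_unity: "card {z::'a. z ^ (2 * m + 1) = 1} = 2 * m + 1"
    by (rule card_roots_of_unity) (simp add: char2_of_nat[OF char2])
  then have "finite {z::'a. z ^ (2 * m + 1) = 1}"
    by (intro card_ge_0_finite) simp
  then have "finite U" "card U = 2 * m"
    using card_unity by (simp_all add: U_def card_Diff_singleton)
  have "0 \<notin> U" by (simp add: U_def)
  have "poly (dickson_sqrt_factor m b) 0 \<noteq> 0"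
    using assms by (simp add: poly_dickson_sqrt_factor_0)
  then have "finite R" unfolding R_def by (intro poly_roots_finite) auto
  have "(\<lambda>z. b * (z + inverse z)) ` U \<subseteq> R"
    using poly_dickson_sqrt_factor_root_of_unity[OF char2 assms(2)] by (auto simp: U_def R_def)
  then have "card ((\<lambda>z. b * (z + inverse z)) ` U) \<le> card R"
    by (rule card_mono[OF \<open>finite R\<close>])
  moreover have "card U \<le> 2 * card ((\<lambda>z. b * (z + inverse z)) ` U)"
    using card_fibre_scaled_plus_inverse_le_2[OF assms(2) \<open>0 \<notin> U\<close>]
    by (rule card_le_mult_card_image[OF \<open>finite U\<close>])
  ultimately show ?thesis
    using \<open>card U = 2 * m\<close> unfolding R_def by linarith
qed

lemma dickson_sqrt_factor_simple_roots:
  fixes b :: "'a::alg_closed_field"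
  assumes char2: "(2::'a) = 0" and "b \<noteq> 0"
  shows "card {y. poly (dickson_sqrt_factor m b) y = 0} = m"
    and "poly (dickson_sqrt_factor m b) y = 0 \<Longrightarrow> order y (dickson_sqrt_factor m b) = 1"
proof -
  let ?g = "dickson_sqrt_factor m b"
  have "?g \<noteq> 0"
    using poly_dickson_sqrt_factor_0[OF char2, of m b] assms(2) by auto
  have "card {y. poly ?g y = 0} \<le> m"
    using card_poly_roots_bound[OF \<open>?g \<noteq> 0\<close>] degree_dickson_sqrt_factor_le[of m b] by linarith
  then show card: "card {y. poly ?g y = 0} = m"
    using card_roots_dickson_sqrt_factor_ge[OF assms, of m] by linarith
  show "order y ?g = 1" if "poly ?g y = 0"
    using order_eq_1_if_degree_le_card_roots[OF \<open>?g \<noteq> 0\<close> _ that] card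
      degree_dickson_sqrt_factor_le[of m b] by linarith
qed

section \<open>Ramification\<close>

lemma order_X_mult_square:
  fixes g :: "'a::idom poly"
  assumes "poly g 0 \<noteq> 0"
  shows "order r ([:0, 1:] * g ^ 2) = (if r = 0 then 1 else 2 * order r g)"
proof -
  have "g \<noteq> 0" using assms by auto
  then have "order r ([:0, 1:] * g ^ 2) = order r [:0, 1:] + order r (g * g)"
    unfolding power2_eq_square by (intro order_mult) simp
  also have "order r (g * g) = 2 * order r g"
    using \<open>g \<noteq> 0\<close> by (subst order_mult) simp_all
  finally have "order r ([:0, 1:] * g ^ 2) = order r [:0, 1:] + 2 * order r g" .
  moreover have "order r [:0, 1:] = (if r = 0 then 1 else 0)"
    using order_power_n_n[of 0 1] by (auto intro: order_0I)
  moreover have "order 0 g = 0"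
    using assms by (rule order_0I)
  ultimately show ?thesis by auto
qed

lemma ram_mset_X_mult_square:
  fixes g :: "'a::idom poly"
  assumes "poly g 0 \<noteq> 0" and "\<And>x. poly g x = 0 \<Longrightarrow> order x g = 1"
  shows "ram_mset ([:0, 1:] * g ^ 2) 0 = add_mset 1 (replicate_mset (card {x. poly g x = 0}) 2)"
proof -
  define f where "f = [:0, 1:] * g ^ 2"
  define R where "R = {x. poly g x = 0}"
  have "finite R" unfolding R_def using assms(1) by (intro poly_roots_finite) auto
  have "0 \<notin> R" using assms(1) by (simp add: R_def)
  have "{r. poly f r = 0} = insert 0 R" by (auto simp: f_def R_def)
  then have "ram_mset f 0 = image_mset (\<lambda>r. order r f) (add_mset 0 (mset_set R))"
    using \<open>finite R\<close> \<open>0 \<notin> R\<close> by (simp add: ram_mset_def)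
  also have "\<dots> = add_mset 1 (image_mset (\<lambda>_. 2) (mset_set R))"
    using \<open>finite R\<close> \<open>0 \<notin> R\<close> assms(2) order_X_mult_square[OF assms(1), folded f_def]
    by (auto simp: R_def intro!: image_mset_cong)
  finally show ?thesis by (simp add: f_def R_def image_mset_const_eq)
qed

lemma ram_index_eq_1_X_mult_square:
  fixes g :: "'a::idom poly"
  assumes "poly g 0 \<noteq> 0"
  shows "{r. poly ([:0, 1:] * g ^ 2) r = 0 \<and> ram_index ([:0, 1:] * g ^ 2) r = 1} = {0}"
proof -
  define f where "f = [:0, 1:] * g ^ 2"
  have "g \<noteq> 0" using assms by auto
  have ram_index_f: "ram_index f r = order r f" if "poly f r = 0" for r
    unfolding ram_index_def that by simp
  have "r = 0" if "poly f r = 0" "ram_index f r = 1" for r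
  proof (rule ccontr)
    assume "r \<noteq> 0"
    have "poly g r = 0" using that(1) \<open>r \<noteq> 0\<close> by (simp add: f_def)
    then have "order r g > 0" using \<open>g \<noteq> 0\<close> by (simp add: order_gt_0_iff)
    then show False
      using that ram_index_f[OF that(1)] \<open>r \<noteq> 0\<close> order_X_mult_square[OF assms, folded f_def]
      by simp
  qed
  moreover have "poly f 0 = 0" "ram_index f 0 = 1"
    using ram_index_f order_X_mult_square[OF assms, folded f_def] by (simp_all add: f_def)
  ultimately have "{r. poly f r = 0 \<and> ram_index f r = 1} = {0}"
    by blast
  then show ?thesis by (simp only: f_def)
qed

lemma critical_values_X_mult_square_char2:
  fixes g :: "'a::idom poly"
  assumes char2: "(2::'a) = 0" and "poly g c = 0"
  shows "critical_values ([:0, 1:] * g ^ 2) = {0}"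
proof -
  have "pderiv ([:0, 1:] * g ^ 2) = g ^ 2"
    using char2 by (simp add: pderiv_mult pderiv_power pderiv_pCons)
  then have "critical_points ([:0, 1:] * g ^ 2) = {x. poly g x = 0}"
    by (simp add: critical_points_def)
  then show ?thesis
    using assms(2) by (auto simp: critical_values_def)
qed

lemma critical_values_monom:
  assumes "(of_nat n :: 'a::idom) \<noteq> 0" and "n > 1"
  shows "critical_values (monom 1 n :: 'a poly) = {0}"
proof -
  have "critical_points (monom 1 n :: 'a poly) = {0}"
    using assms by (auto simp: critical_points_def pderiv_monom poly_monom)
  then show ?thesis
    using assms(2) by (simp add: critical_values_def poly_monom)
qed

lemma roots_monom:
  "n > 0 \<Longrightarrow> {r::'a::idom. poly (monom 1 n) r = 0} = {0}"
  by (auto simp: poly_monom)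

lemma ram_mset_monom:
  assumes "n > 0"
  shows "ram_mset (monom 1 n :: 'a::idom poly) 0 = {#n#}"
proof -
  have "order 0 (monom 1 n :: 'a poly) = n"
    using order_power_n_n[of "0::'a" n] by (simp add: monom_altdef)
  moreover have "monom 1 n - [:0:] = (monom 1 n :: 'a poly)" by simp
  ultimately show ?thesis
    unfolding ram_mset_def by (simp only: roots_monom[OF assms]) simp
qed

lemma dickson_char2_ramification:
  fixes a :: "'a::alg_closed_field"
  assumes char2: "(2::'a) = 0" and "a \<noteq> 0" "odd n" "n > 1"
  shows "critical_values (dickson n a) = {0}"
    and "ram_mset (dickson n a) 0 = add_mset 1 (replicate_mset ((n - 1) div 2) 2)"
    and "{r. poly (dickson n a) r = 0 \<and> ram_index (dickson n a) r = 1} = {0}"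
proof -
  obtain m where n: "n = 2 * m + 1" using \<open>odd n\<close> by (rule oddE)
  then have "m > 0" using \<open>n > 1\<close> by simp
  obtain b where b: "b ^ 2 = a" using nth_root_exists[of 2 a] by auto
  then have "b \<noteq> 0" using \<open>a \<noteq> 0\<close> by auto
  define g where "g = dickson_sqrt_factor m b"
  have dickson_eq: "dickson n a = [:0, 1:] * g ^ 2"
    unfolding g_def n b[symmetric] by (rule dickson_odd_char2[OF char2])
  have "poly g 0 \<noteq> 0"
    unfolding g_def using \<open>b \<noteq> 0\<close> by (simp add: poly_dickson_sqrt_factor_0[OF char2])
  note g_roots = dickson_sqrt_factor_simple_roots[OF char2 \<open>b \<noteq> 0\<close>, of m, folded g_def]
  then have "card {x. poly g x = 0} > 0"
    using \<open>m > 0\<close> by simp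
  then obtain c where "poly g c = 0" by (auto simp: card_gt_0_iff)
  show "critical_values (dickson n a) = {0}"
    unfolding dickson_eq by (rule critical_values_X_mult_square_char2[OF char2 \<open>poly g c = 0\<close>])
  have "ram_mset (dickson n a) 0 = add_mset 1 (replicate_mset (card {x. poly g x = 0}) 2)"
    unfolding dickson_eq by (rule ram_mset_X_mult_square[OF \<open>poly g 0 \<noteq> 0\<close> g_roots(2)])
  then show "ram_mset (dickson n a) 0 = add_mset 1 (replicate_mset ((n - 1) div 2) 2)"
    using g_roots(1) n by simp
  show "{r. poly (dickson n a) r = 0 \<and> ram_index (dickson n a) r = 1} = {0}"
    unfolding dickson_eq by (rule ram_index_eq_1_X_mult_square[OF \<open>poly g 0 \<noteq> 0\<close>])
qed

theorem lemma2p19: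
  fixes a :: "bit alg_closure" and n :: nat
  assumes "a \<noteq> 0" and "odd n" and "n > 1"
  shows "critical_values (monom 1 n :: bit alg_closure poly) = {0}
       \<and> ram_mset (monom 1 n :: bit alg_closure poly) 0 = {#n#}
       \<and> {r. poly (monom 1 n :: bit alg_closure poly) r = 0} = {0}
       \<and> critical_values (dickson n a) = {0}
       \<and> ram_mset (dickson n a) 0 = {#1#} + replicate_mset ((n - 1) div 2) 2
       \<and> {r. poly (dickson n a) r = 0 \<and> ram_index (dickson n a) r = 1} = {0}"
proof -
  note char2 = two_eq_zero_alg_closure_bit
  have "(of_nat n :: bit alg_closure) \<noteq> 0"
    using \<open>odd n\<close> by (simp add: char2_of_nat[OF char2])
  then have "critical_values (monom 1 n :: bit alg_closure poly) = {0}"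
    using \<open>n > 1\<close> by (rule critical_values_monom)
  then show ?thesis
    using ram_mset_monom[of n] roots_monom[of n] \<open>n > 1\<close>
      dickson_char2_ramification[OF char2 assms]
    by simp
qed

end
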